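(* Let $R>0$ and $p>0$. Let $\mathcal G$ be a hypergraph, $U$ a set, $\pi:V(\mathcal G)\to U$ a function with $|\pi(E)|=|E|$ for every $E\in\mathcal G$, and $\vartheta:\pi(\mathcal G)\to\mathbb R_{\ge0}$. If $\Lambda_p(\vartheta)<e(\vartheta)^2/R$, then $\Lambda_p(\vartheta\mathbin{\hat\circ}\pi)<e(\vartheta\mathbin{\hat\circ}\pi)^2/R$.
   Context: A hypergraph is identified with its edge set; $\pi(\mathcal G)=\{\pi(E):E\in\mathcal G\}$ with vertex set $\pi(V(\mathcal G))$. For $\nu:\mathcal G\to\mathbb R_{\ge0}$: $e(\nu)=\sum_E\nu(E)$, $d_\nu(L)=\sum_{E\in\mathcal G,L\subset E}\nu(E)$, $\Lambda_p(\nu)=\sum_{L\subset V(\mathcal G),|L|\ge2}d_\nu(L)^2p^{-|L|}$. The pullback $\vartheta\mathbin{\hat\circ}\pi:\mathcal G\to\mathbb R_{\ge0}$ is $\vartheta\mathbin{\hat\circ}\pi(E)=\vartheta(\pi(E))/|\{E_0\in\mathcal G:\pi(E_0)=\pi(E)\}|$. *)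

theory Defs
  imports Complex_Main
begin

text \<open>A hypergraph is given by a finite vertex set V and an edge set G of subsets of V.
  Weights nu are functions on edges (only values on G matter).\<close>

definition e_wt :: "'a set set \<Rightarrow> ('a set \<Rightarrow> real) \<Rightarrow> real" where
  "e_wt G \<nu> = (\<Sum>E\<in>G. \<nu> E)"

definition deg :: "'a set set \<Rightarrow> ('a set \<Rightarrow> real) \<Rightarrow> 'a set \<Rightarrow> real" where
  "deg G \<nu> L = (\<Sum>E\<in>{E\<in>G. L \<subseteq> E}. \<nu> E)"

definition Lambda :: "real \<Rightarrow> 'a set \<Rightarrow> 'a set set \<Rightarrow> ('a set \<Rightarrow> real) \<Rightarrow> real" where
  "Lambda p V G \<nu> = (\<Sum>L\<in>{L. L \<subseteq> V \<and> card L \<ge> 2}. (deg G \<nu> L)^2 * p powr (- real (card L)))"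

definition pullback :: "('b set \<Rightarrow> real) \<Rightarrow> ('a \<Rightarrow> 'b) \<Rightarrow> 'a set set \<Rightarrow> 'a set \<Rightarrow> real" where
  "pullback \<theta> \<pi> G E = \<theta> (\<pi> ` E) / real (card {E0\<in>G. \<pi> ` E0 = \<pi> ` E})"

end

theory Submission
  imports Defs
begin

text \<open>The pullback spreads the weight of each image edge \<open>F\<close> evenly over the edges \<open>E\<close> with
  \<open>\<pi> ` E = F\<close>, so every sum over edges that only depends on \<open>\<pi> ` E\<close> is preserved; in particular
  \<open>e\<close> is. For \<open>\<Lambda>\<^sub>p\<close>, the sets \<open>L\<close> of positive degree lie inside an edge, on which \<open>\<pi>\<close> is
  injective, so \<open>|\<pi> ` L| = |L|\<close> and an edge contains at most one \<open>L\<close> of each fibre of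
  \<open>L \<mapsto> \<pi> ` L\<close>. Hence the degrees in the fibre over \<open>M\<close> sum to at most the degree of \<open>M\<close> in
  the image, and the sum of their squares is at most its square.\<close>

lemma finite_if_edges_subset:
  assumes "finite V" "\<And>E. E \<in> G \<Longrightarrow> E \<subseteq> V"
  shows "finite G"
  using assms by (meson finite_Pow_iff PowI finite_subset subsetI)

lemma sum_pullback_filter:
  assumes "finite G"
  shows "(\<Sum>E\<in>{E\<in>G. P (\<pi> ` E)}. pullback \<theta> \<pi> G E) = (\<Sum>F\<in>{F\<in>(\<lambda>E. \<pi> ` E) ` G. P F}. \<theta> F)"
proof -
  let ?S = "{E\<in>G. P (\<pi> ` E)}"
  have "(\<Sum>E\<in>?S. pullback \<theta> \<pi> G E)
      = (\<Sum>F\<in>(\<lambda>E. \<pi> ` E) ` ?S. \<Sum>E\<in>{E\<in>?S. \<pi> ` E = F}. pullback \<theta> \<pi> G E)"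
    using assms by (intro sum.image_gen) auto
  also have "(\<lambda>E. \<pi> ` E) ` ?S = {F\<in>(\<lambda>E. \<pi> ` E) ` G. P F}" by auto
  also have "(\<Sum>F\<in>\<dots>. \<Sum>E\<in>{E\<in>?S. \<pi> ` E = F}. pullback \<theta> \<pi> G E) = (\<Sum>F\<in>\<dots>. \<theta> F)"
  proof (rule sum.cong[OF refl])
    fix F assume "F \<in> {F\<in>(\<lambda>E. \<pi> ` E) ` G. P F}"
    then obtain E0 where "E0 \<in> G" "\<pi> ` E0 = F" "P F" by auto
    define C where "C = {E\<in>G. \<pi> ` E = F}"
    have "{E\<in>?S. \<pi> ` E = F} = C" using \<open>P F\<close> by (auto simp: C_def)
    moreover have "card C > 0"
      using assms \<open>E0 \<in> G\<close> \<open>\<pi> ` E0 = F\<close> by (auto simp: C_def card_gt_0_iff)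
    moreover have "pullback \<theta> \<pi> G E = \<theta> F / real (card C)" if "E \<in> C" for E
      using that by (simp add: pullback_def C_def)
    ultimately show "(\<Sum>E\<in>{E\<in>?S. \<pi> ` E = F}. pullback \<theta> \<pi> G E) = \<theta> F" by simp
  qed
  finally show ?thesis .
qed

lemma e_wt_pullback:
  assumes "finite G"
  shows "e_wt G (pullback \<theta> \<pi> G) = e_wt ((\<lambda>E. \<pi> ` E) ` G) \<theta>"
  using sum_pullback_filter[OF assms, where P = "\<lambda>_. True"] by (simp add: e_wt_def)

lemma deg_image_eq_sum_pullback:
  assumes "finite G"
  shows "deg ((\<lambda>E. \<pi> ` E) ` G) \<theta> M = (\<Sum>E\<in>{E\<in>G. M \<subseteq> \<pi> ` E}. pullback \<theta> \<pi> G E)"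
  using sum_pullback_filter[OF assms, where P = "\<lambda>F. M \<subseteq> F"] by (simp add: deg_def)

lemma sum_squares_le_square_sum:
  fixes f :: "'a \<Rightarrow> real"
  assumes "finite A" "\<And>x. x \<in> A \<Longrightarrow> f x \<ge> 0"
  shows "(\<Sum>x\<in>A. (f x)\<^sup>2) \<le> (\<Sum>x\<in>A. f x)\<^sup>2"
proof -
  have "(\<Sum>x\<in>A. (f x)\<^sup>2) \<le> (\<Sum>x\<in>A. f x * sum f A)"
    using assms by (auto simp: power2_eq_square intro!: sum_mono mult_left_mono member_le_sum)
  also have "\<dots> = (sum f A)\<^sup>2" by (simp add: power2_eq_square sum_distrib_right)
  finally show ?thesis .
qed

lemma deg_nonneg:
  assumes "\<And>E. E \<in> G \<Longrightarrow> \<nu> E \<ge> 0"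
  shows "deg G \<nu> L \<ge> 0"
  using assms by (auto simp: deg_def intro: sum_nonneg)

lemma deg_nonzero_imp_covered:
  assumes "deg G \<nu> L \<noteq> 0"
  shows "\<exists>E\<in>G. L \<subseteq> E"
proof (rule ccontr)
  assume "\<not> (\<exists>E\<in>G. L \<subseteq> E)"
  then have "{E\<in>G. L \<subseteq> E} = {}" by auto
  then have "deg G \<nu> L = 0" unfolding deg_def by (simp only: sum.empty)
  then show False using assms by contradiction
qed

lemma Lambda_eq_sum_covered:
  assumes "finite V"
  shows "Lambda p V G \<nu>
    = (\<Sum>L\<in>{L. L \<subseteq> V \<and> card L \<ge> 2 \<and> (\<exists>E\<in>G. L \<subseteq> E)}. (deg G \<nu> L)\<^sup>2 * p powr (- real (card L)))"
  unfolding Lambda_def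
  by (rule sum.mono_neutral_right) (use assms deg_nonzero_imp_covered in auto)

text \<open>Each edge \<open>E\<close> contains at most one member of \<open>A\<close>, because \<open>\<pi>\<close> is injective on \<open>E\<close>
  and all members of \<open>A\<close> have the same image.\<close>

lemma sum_deg_fibre_le:
  assumes "finite G" "finite A"
    and inj: "\<And>E. E \<in> G \<Longrightarrow> inj_on \<pi> E"
    and nonneg: "\<And>E. E \<in> G \<Longrightarrow> \<nu> E \<ge> 0"
    and fibre: "\<And>L. L \<in> A \<Longrightarrow> \<pi> ` L = M"
  shows "(\<Sum>L\<in>A. deg G \<nu> L) \<le> (\<Sum>E\<in>{E\<in>G. M \<subseteq> \<pi> ` E}. \<nu> E)"
proof -
  have "(\<Sum>L\<in>A. deg G \<nu> L) = (\<Sum>L\<in>A. \<Sum>E\<in>G. if L \<subseteq> E then \<nu> E else 0)"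
    by (simp add: deg_def sum.inter_filter[OF \<open>finite G\<close>])
  also have "\<dots> = (\<Sum>E\<in>G. real (card {L\<in>A. L \<subseteq> E}) * \<nu> E)"
    by (subst sum.swap) (simp add: sum.inter_filter[OF \<open>finite A\<close>, symmetric])
  also have "\<dots> \<le> (\<Sum>E\<in>G. if M \<subseteq> \<pi> ` E then \<nu> E else 0)"
  proof (rule sum_mono)
    fix E assume "E \<in> G"
    show "real (card {L\<in>A. L \<subseteq> E}) * \<nu> E \<le> (if M \<subseteq> \<pi> ` E then \<nu> E else 0)"
    proof (cases "{L\<in>A. L \<subseteq> E} = {}")
      case False
      then obtain L where "L \<in> A" "L \<subseteq> E" by auto
      then have "M \<subseteq> \<pi> ` E" using fibre[OF \<open>L \<in> A\<close>] by auto
      moreover have "card {L\<in>A. L \<subseteq> E} \<le> 1"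
      proof -
        have "L1 = L2" if "L1 \<in> A" "L1 \<subseteq> E" "L2 \<in> A" "L2 \<subseteq> E" for L1 L2
          using that fibre inj_on_image_eq_iff[OF inj[OF \<open>E \<in> G\<close>]] by metis
        then show ?thesis using \<open>finite A\<close> by (auto simp: card_le_Suc0_iff_eq)
      qed
      ultimately show ?thesis
        using nonneg[OF \<open>E \<in> G\<close>] by (simp add: mult_left_le_one_le)
    qed (simp only: card.empty, use nonneg[OF \<open>E \<in> G\<close>] in simp)
  qed
  also have "\<dots> = (\<Sum>E\<in>{E\<in>G. M \<subseteq> \<pi> ` E}. \<nu> E)"
    by (simp add: sum.inter_filter[OF \<open>finite G\<close>])
  finally show ?thesis .
qed

lemma Lambda_pullback_le:
  assumes "finite V" and edges: "\<And>E. E \<in> G \<Longrightarrow> E \<subseteq> V"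
    and inj: "\<And>E. E \<in> G \<Longrightarrow> inj_on \<pi> E"
    and nonneg: "\<And>F. F \<in> (\<lambda>E. \<pi> ` E) ` G \<Longrightarrow> \<theta> F \<ge> 0"
  shows "Lambda p V G (pullback \<theta> \<pi> G) \<le> Lambda p (\<pi> ` V) ((\<lambda>E. \<pi> ` E) ` G) \<theta>"
proof -
  define \<nu> where "\<nu> = pullback \<theta> \<pi> G"
  define w where "w L = (deg G \<nu> L)\<^sup>2 * p powr (- real (card L))" for L
  define w' where "w' M = (deg ((\<lambda>E. \<pi> ` E) ` G) \<theta> M)\<^sup>2 * p powr (- real (card M))" for M
  define LS where "LS = {L. L \<subseteq> V \<and> card L \<ge> 2 \<and> (\<exists>E\<in>G. L \<subseteq> E)}"
  have "finite G" using \<open>finite V\<close> edges by (rule finite_if_edges_subset)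
  have "finite LS" using \<open>finite V\<close> by (simp add: LS_def)
  have \<nu>_nonneg: "\<nu> E \<ge> 0" if "E \<in> G" for E
    using nonneg that by (simp add: \<nu>_def pullback_def)
  have card_image: "card (\<pi> ` L) = card L" if "L \<in> LS" for L
    using that inj by (auto simp: LS_def intro: card_image inj_on_subset)
  have fibre_le: "(\<Sum>L\<in>{L\<in>LS. \<pi> ` L = M}. w L) \<le> w' M" for M
  proof -
    define A where "A = {L\<in>LS. \<pi> ` L = M}"
    have "finite A" using \<open>finite LS\<close> by (simp add: A_def)
    have "(\<Sum>L\<in>A. w L) = (\<Sum>L\<in>A. p powr (- real (card M)) * (deg G \<nu> L)\<^sup>2)"
    proof (intro sum.cong refl)
      fix L assume "L \<in> A"
      then have "card L = card M" using card_image by (auto simp: A_def)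
      then show "w L = p powr (- real (card M)) * (deg G \<nu> L)\<^sup>2" by (simp add: w_def)
    qed
    also have "\<dots> = p powr (- real (card M)) * (\<Sum>L\<in>A. (deg G \<nu> L)\<^sup>2)"
      by (simp add: sum_distrib_left)
    also have "\<dots> \<le> p powr (- real (card M)) * (\<Sum>L\<in>A. deg G \<nu> L)\<^sup>2"
      using \<open>finite A\<close> \<nu>_nonneg
      by (intro mult_left_mono sum_squares_le_square_sum deg_nonneg) auto
    also have "\<dots> \<le> p powr (- real (card M)) * (deg ((\<lambda>E. \<pi> ` E) ` G) \<theta> M)\<^sup>2"
    proof (intro mult_left_mono power_mono)
      show "(\<Sum>L\<in>A. deg G \<nu> L) \<le> deg ((\<lambda>E. \<pi> ` E) ` G) \<theta> M"
        unfolding deg_image_eq_sum_pullback[OF \<open>finite G\<close>] \<nu>_def[symmetric]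
        using \<open>finite G\<close> \<open>finite A\<close> inj \<nu>_nonneg by (intro sum_deg_fibre_le) (auto simp: A_def)
      show "0 \<le> (\<Sum>L\<in>A. deg G \<nu> L)" using \<nu>_nonneg by (intro sum_nonneg deg_nonneg) auto
    qed simp
    finally show ?thesis by (simp add: A_def w'_def mult.commute)
  qed
  have image_LS: "(\<lambda>L. \<pi> ` L) ` LS \<subseteq> {M. M \<subseteq> \<pi> ` V \<and> card M \<ge> 2}"
  proof
    fix M assume "M \<in> (\<lambda>L. \<pi> ` L) ` LS"
    then obtain L where "L \<in> LS" "M = \<pi> ` L" by blast
    then show "M \<in> {M. M \<subseteq> \<pi> ` V \<and> card M \<ge> 2}"
      using card_image[OF \<open>L \<in> LS\<close>] by (auto simp: LS_def)
  qed
  have "Lambda p V G \<nu> = sum w LS"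
    unfolding Lambda_eq_sum_covered[OF \<open>finite V\<close>] by (simp add: w_def LS_def)
  also have "\<dots> = (\<Sum>M\<in>(\<lambda>L. \<pi> ` L) ` LS. \<Sum>L\<in>{L\<in>LS. \<pi> ` L = M}. w L)"
    using \<open>finite LS\<close> by (rule sum.image_gen)
  also have "\<dots> \<le> (\<Sum>M\<in>(\<lambda>L. \<pi> ` L) ` LS. w' M)"
    using fibre_le by (rule sum_mono)
  also have "\<dots> \<le> (\<Sum>M\<in>{M. M \<subseteq> \<pi> ` V \<and> card M \<ge> 2}. w' M)"
    using \<open>finite V\<close> image_LS by (intro sum_mono2) (auto simp: w'_def)
  also have "\<dots> = Lambda p (\<pi> ` V) ((\<lambda>E. \<pi> ` E) ` G) \<theta>"
    by (simp add: Lambda_def w'_def)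
  finally show ?thesis by (simp add: \<nu>_def)
qed

theorem lemma7p4:
  fixes R p :: real and V :: "'a set" and G :: "'a set set"
    and \<pi> :: "'a \<Rightarrow> 'b" and \<theta> :: "'b set \<Rightarrow> real"
  assumes "R > 0" and "p > 0"
    and "finite V" and "\<forall>E\<in>G. E \<subseteq> V"
    and "\<forall>E\<in>G. card (\<pi> ` E) = card E"
    and "\<forall>F\<in>(\<lambda>E. \<pi> ` E) ` G. \<theta> F \<ge> 0"
    and "Lambda p (\<pi> ` V) ((\<lambda>E. \<pi> ` E) ` G) \<theta> < (e_wt ((\<lambda>E. \<pi> ` E) ` G) \<theta>)^2 / R"
  shows "Lambda p V G (pullback \<theta> \<pi> G) < (e_wt G (pullback \<theta> \<pi> G))^2 / R"
proof -
  have "finite G" using assms(3,4) by (intro finite_if_edges_subset) auto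
  have inj: "inj_on \<pi> E" if "E \<in> G" for E
    using assms(3,4,5) that by (meson eq_card_imp_inj_on finite_subset)
  have "Lambda p V G (pullback \<theta> \<pi> G) \<le> Lambda p (\<pi> ` V) ((\<lambda>E. \<pi> ` E) ` G) \<theta>"
    using assms(3,4,6) inj by (intro Lambda_pullback_le) auto
  also have "\<dots> < (e_wt ((\<lambda>E. \<pi> ` E) ` G) \<theta>)^2 / R" by (rule assms(7))
  also have "\<dots> = (e_wt G (pullback \<theta> \<pi> G))^2 / R"
    by (simp add: e_wt_pullback[OF \<open>finite G\<close>])
  finally show ?thesis .
qed

end
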